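(* Let $\Gamma$ be a countably infinite group acting minimally and continuously on a compact metrizable space $X$ with more than one orbit, let $x_1\in X$ have trivial stabilizer, and let $f:X\setminus\{x_1\}\to\{1,-1\}$ be continuous and not continuously extendable to $X$. Let $\pi_f:X_f\to X$ be the McMahon extension with continuous function $\tilde f:X_f\to\{1,-1\}$, and set $X_{f,+}=\tilde f^{-1}(1)$, $X_{f,-}=\tilde f^{-1}(-1)$. Then $\Gamma\curvearrowright X_f$ is null if and only if $\Gamma\curvearrowright X$ is null and the pair $(X_{f,+},X_{f,-})$ does not have arbitrarily large finite independence sets.
   Context: McMahon extension: $\Gamma\curvearrowright X_f$ is a minimal continuous action on a compact metrizable space with a $\Gamma$-equivariant continuous surjection $\pi_f:X_f\to X$ such that $\pi_f^{-1}(x)$ is a single point for $x\notin\Gamma x_1$ and two points for $x\in\Gamma x_1$, and $\tilde f$ is the continuous extension to $X_f$ of $f\circ\pi_f$ on $X_f\setminus\pi_f^{-1}(x_1)$; this extension is unique up to conjugacy (constructed as the quotient of the Stone–Čech compactification $W$ of an orbit $\Gamma x_0$, $x_0\notin\Gamma x_1$, by $w_1\sim w_2$ iff they have the same image in $X$ and $f_W(sw_1)=f_W(sw_2)$ for all $s$, $f_W$ the extension of $f$). A set $M\subseteq\Gamma$ is an independence set for $(A_1,A_2)$ if $\bigcap_{s\in F}s^{-1}A_{\omega(s)}\ne\emptyset$ for every nonempty finite $F\subseteq M$ and $\omega\in\{1,2\}^F$. Null: every sequence entropy $\limsup_n\frac1n\log N(\bigvee_{i=1}^n s_i^{-1}\mathcal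 U)$ vanishes, for all sequences $\{s_n\}\subseteq\Gamma$ and finite open covers $\mathcal U$. *)

theory Defs
  imports "HOL-Analysis.Analysis" "HOL-Algebra.Group"
begin

definition cont_action :: "('g, 'b) monoid_scheme \<Rightarrow> 'x topology \<Rightarrow> ('g \<Rightarrow> 'x \<Rightarrow> 'x) \<Rightarrow> bool" where
  "cont_action G X T \<longleftrightarrow>
     (\<forall>g\<in>carrier G. continuous_map X X (T g)) \<and>
     (\<forall>x\<in>topspace X. T \<one>\<^bsub>G\<^esub> x = x) \<and>
     (\<forall>g\<in>carrier G. \<forall>h\<in>carrier G. \<forall>x\<in>topspace X. T (g \<otimes>\<^bsub>G\<^esub> h) x = T g (T h x))"

definition orbit :: "('g, 'b) monoid_scheme \<Rightarrow> ('g \<Rightarrow> 'x \<Rightarrow> 'x) \<Rightarrow> 'x \<Rightarrow> 'x set" where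
  "orbit G T x = {T g x | g. g \<in> carrier G}"

definition minimal_action :: "('g, 'b) monoid_scheme \<Rightarrow> 'x topology \<Rightarrow> ('g \<Rightarrow> 'x \<Rightarrow> 'x) \<Rightarrow> bool" where
  "minimal_action G X T \<longleftrightarrow> (\<forall>x\<in>topspace X. X closure_of (orbit G T x) = topspace X)"

definition act_pre :: "'x topology \<Rightarrow> ('g \<Rightarrow> 'x \<Rightarrow> 'x) \<Rightarrow> 'g \<Rightarrow> 'x set \<Rightarrow> 'x set" where
  "act_pre X T s A = {y \<in> topspace X. T s y \<in> A}"

definition finite_open_cover :: "'x topology \<Rightarrow> 'x set set \<Rightarrow> bool" where
  "finite_open_cover X U \<longleftrightarrow> finite U \<and> (\<forall>V\<in>U. openin X V) \<and> topspace X \<subseteq> \<Union>U"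

definition Ncov :: "'x topology \<Rightarrow> 'x set set \<Rightarrow> nat" where
  "Ncov X C = Inf {card V | V. V \<subseteq> C \<and> finite V \<and> topspace X \<subseteq> \<Union>V}"

definition join_cover :: "'x topology \<Rightarrow> ('g \<Rightarrow> 'x \<Rightarrow> 'x) \<Rightarrow> (nat \<Rightarrow> 'g) \<Rightarrow> nat \<Rightarrow> 'x set set \<Rightarrow> 'x set set" where
  "join_cover X T s n U =
     (\<lambda>W. topspace X \<inter> (\<Inter>i\<in>{1..n}. act_pre X T (s i) (W i))) ` ({1..n} \<rightarrow> U)"

definition seq_entropy :: "'x topology \<Rightarrow> ('g \<Rightarrow> 'x \<Rightarrow> 'x) \<Rightarrow> (nat \<Rightarrow> 'g) \<Rightarrow> 'x set set \<Rightarrow> ereal" where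
  "seq_entropy X T s U =
     limsup (\<lambda>n. ereal (ln (real (Ncov X (join_cover X T s n U))) / real n))"

definition null_action :: "('g, 'b) monoid_scheme \<Rightarrow> 'x topology \<Rightarrow> ('g \<Rightarrow> 'x \<Rightarrow> 'x) \<Rightarrow> bool" where
  "null_action G X T \<longleftrightarrow>
     (\<forall>s U. (\<forall>n. s n \<in> carrier G) \<longrightarrow> finite_open_cover X U \<longrightarrow> seq_entropy X T s U = 0)"

definition indep_set :: "('g, 'b) monoid_scheme \<Rightarrow> 'x topology \<Rightarrow> ('g \<Rightarrow> 'x \<Rightarrow> 'x) \<Rightarrow> 'x set \<Rightarrow> 'x set \<Rightarrow> 'g set \<Rightarrow> bool" where
  "indep_set G X T A1 A2 M \<longleftrightarrow> M \<subseteq> carrier G \<and>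
     (\<forall>F. F \<subseteq> M \<longrightarrow> finite F \<longrightarrow> F \<noteq> {} \<longrightarrow>
        (\<forall>\<omega> \<in> F \<rightarrow> {1::nat, 2}.
           (\<Inter>s\<in>F. act_pre X T s (if \<omega> s = 1 then A1 else A2)) \<noteq> {}))"

definition arb_large_indep :: "('g, 'b) monoid_scheme \<Rightarrow> 'x topology \<Rightarrow> ('g \<Rightarrow> 'x \<Rightarrow> 'x) \<Rightarrow> 'x set \<Rightarrow> 'x set \<Rightarrow> bool" where
  "arb_large_indep G X T A1 A2 \<longleftrightarrow>
     (\<forall>n::nat. \<exists>M. finite M \<and> card M \<ge> n \<and> indep_set G X T A1 A2 M)"

definition mcmahon_ext ::
  "('g, 'b) monoid_scheme \<Rightarrow> 'x topology \<Rightarrow> ('g \<Rightarrow> 'x \<Rightarrow> 'x) \<Rightarrow> 'x \<Rightarrow> ('x \<Rightarrow> real)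
   \<Rightarrow> 'z topology \<Rightarrow> ('g \<Rightarrow> 'z \<Rightarrow> 'z) \<Rightarrow> ('z \<Rightarrow> 'x) \<Rightarrow> ('z \<Rightarrow> real) \<Rightarrow> bool" where
  "mcmahon_ext G X T x1 f Xf Tf pf ft \<longleftrightarrow>
     compact_space Xf \<and> metrizable_space Xf \<and>
     cont_action G Xf Tf \<and> minimal_action G Xf Tf \<and>
     continuous_map Xf X pf \<and> pf ` topspace Xf = topspace X \<and>
     (\<forall>g\<in>carrier G. \<forall>z\<in>topspace Xf. pf (Tf g z) = T g (pf z)) \<and>
     (\<forall>x\<in>topspace X - orbit G T x1. card {z\<in>topspace Xf. pf z = x} = 1) \<and>
     (\<forall>x\<in>orbit G T x1. card {z\<in>topspace Xf. pf z = x} = 2) \<and>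
     continuous_map Xf euclideanreal ft \<and>
     (\<forall>z\<in>topspace Xf. pf z \<noteq> x1 \<longrightarrow> ft z = f (pf z))"

end

theory Submission
  imports Defs "HOL-Library.Discrete_Functions" "HOL-Real_Asymp.Real_Asymp"
begin

text \<open>
  Nullness passes from X_f to its factor X because open covers pull back along pf and a
  surjection can only decrease covering numbers. If the pair (X_{f,+}, X_{f,-}) had independence
  sets of every size, putting one of size 2^j at the positions 2^j+1, ..., 2^(j+1) of a single
  sequence would force 2^(2^j) elements in every subcover of the 2^(j+1)-fold join of the cover
  by the complements of X_{f,+} and X_{f,-}, so the sequence entropy would be at least ln 2 / 2.

  Conversely, since f has no continuous extension, the two points over x1 carry different values
  of ft, so translates of X_{f,+} separate the points of every fibre of pf. By compactness every
  open cover of X_f is then refined by the pull-back of an open cover of X cut into the pattern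
  classes of finitely many translates of X_{f,+}. Along s_1, ..., s_n only the patterns on the
  at most n |K| products k s_i matter, and if independence sets have size less than d, the
  Sauer--Shelah lemma leaves at most (n |K| + 1)^d of them. Hence covering numbers on X_f exceed
  those on X by a polynomial factor only, which is invisible to sequence entropy.
\<close>

section \<open>Covering numbers\<close>

lemma cont_action_topspace:
  "cont_action G X T \<Longrightarrow> g \<in> carrier G \<Longrightarrow> x \<in> topspace X \<Longrightarrow> T g x \<in> topspace X"
  unfolding cont_action_def by (meson continuous_map_funspace funcset_mem)

lemma cont_action_mult:
  "cont_action G X T \<Longrightarrow> g \<in> carrier G \<Longrightarrow> h \<in> carrier G \<Longrightarrow> x \<in> topspace X
    \<Longrightarrow> T (g \<otimes>\<^bsub>G\<^esub> h) x = T g (T h x)"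
  unfolding cont_action_def by blast

lemma Ncov_le_card:
  assumes "D \<subseteq> C" "finite D" "topspace X \<subseteq> \<Union>D"
  shows "Ncov X C \<le> card D"
  unfolding Ncov_def using assms by (intro cInf_lower) blast+

lemma Ncov_attained:
  assumes "finite C" "topspace X \<subseteq> \<Union>C"
  obtains D where "D \<subseteq> C" "finite D" "topspace X \<subseteq> \<Union>D" "card D = Ncov X C"
proof -
  have "{card V | V. V \<subseteq> C \<and> finite V \<and> topspace X \<subseteq> \<Union>V} \<noteq> {}"
    using assms by blast
  then have "Ncov X C \<in> {card V | V. V \<subseteq> C \<and> finite V \<and> topspace X \<subseteq> \<Union>V}"
    unfolding Ncov_def by (rule Inf_nat_def1)
  then obtain D where "Ncov X C = card D" "D \<subseteq> C" "finite D" "topspace X \<subseteq> \<Union>D"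
    by blast
  then show thesis using that by simp
qed

lemma card_le_Ncov_if_separated:
  assumes "finite C" "topspace X \<subseteq> \<Union>C" "y ` A \<subseteq> topspace X"
    and "\<And>a b c. a \<in> A \<Longrightarrow> b \<in> A \<Longrightarrow> c \<in> C \<Longrightarrow> y a \<in> c \<Longrightarrow> y b \<in> c \<Longrightarrow> a = b"
  shows "card A \<le> Ncov X C"
proof -
  obtain D where D: "D \<subseteq> C" "finite D" "topspace X \<subseteq> \<Union>D" "card D = Ncov X C"
    using Ncov_attained[OF assms(1,2)] .
  have "\<forall>a\<in>A. \<exists>d. d \<in> D \<and> y a \<in> d" using assms(3) D(3) by blast
  from bchoice[OF this] obtain d where d: "\<forall>a\<in>A. d a \<in> D \<and> y a \<in> d a" by blast
  have "inj_on d A"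
  proof (rule inj_onI)
    fix a b assume "a \<in> A" "b \<in> A" "d a = d b"
    then have "y a \<in> d a" "y b \<in> d a" "d a \<in> C" using d D(1) by auto
    then show "a = b" using assms(4) \<open>a \<in> A\<close> \<open>b \<in> A\<close> by blast
  qed
  then have "card A \<le> card D"
    using d D(2) by (intro card_inj_on_le) auto
  then show ?thesis using D(4) by simp
qed

lemma Ncov_le_Ncov_if_image_refines:
  assumes "finite D" "topspace Y \<subseteq> \<Union>D" "topspace X \<subseteq> p ` topspace Y"
    and "\<And>d. d \<in> D \<Longrightarrow> \<exists>c\<in>C. p ` d \<subseteq> c"
  shows "Ncov X C \<le> Ncov Y D"
proof -
  obtain D0 where D0: "D0 \<subseteq> D" "finite D0" "topspace Y \<subseteq> \<Union>D0" "card D0 = Ncov Y D"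
    using Ncov_attained[OF assms(1,2)] .
  have "\<forall>d\<in>D. \<exists>c. c \<in> C \<and> p ` d \<subseteq> c" using assms(4) by blast
  from bchoice[OF this] obtain c where c: "\<forall>d\<in>D. c d \<in> C \<and> p ` d \<subseteq> c d" by blast
  have "topspace X \<subseteq> \<Union>(c ` D0)"
  proof
    fix x assume "x \<in> topspace X"
    then obtain y where y: "y \<in> topspace Y" "x = p y" using assms(3) by blast
    then obtain d where "d \<in> D0" "y \<in> d" using D0(3) by blast
    then show "x \<in> \<Union>(c ` D0)" using c D0(1) y(2) by blast
  qed
  then have "Ncov X C \<le> card (c ` D0)"
    using D0(1,2) c by (intro Ncov_le_card) auto
  also have "\<dots> \<le> card D0" using D0(2) by (rule card_image_le)
  finally show ?thesis using D0(4) by simp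
qed

lemma join_cover_memI:
  "W \<in> {1..n} \<rightarrow> U \<Longrightarrow> topspace X \<inter> (\<Inter>i\<in>{1..n}. act_pre X T (s i) (W i)) \<in> join_cover X T s n U"
  unfolding join_cover_def by (rule imageI)

lemma join_cover_memE:
  assumes "c \<in> join_cover X T s n U"
  obtains W where "W \<in> {1..n} \<rightarrow> U" "c = topspace X \<inter> (\<Inter>i\<in>{1..n}. act_pre X T (s i) (W i))"
  using assms unfolding join_cover_def by (rule imageE)

lemma finite_join_cover:
  assumes "finite U"
  shows "finite (join_cover X T s n U)"
proof -
  let ?J = "\<lambda>W. topspace X \<inter> (\<Inter>i\<in>{1..n}. act_pre X T (s i) (W i))"
  have "?J W \<in> ?J ` ({1..n} \<rightarrow>\<^sub>E U)" if "W \<in> {1..n} \<rightarrow> U" for W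
  proof
    show "restrict W {1..n} \<in> {1..n} \<rightarrow>\<^sub>E U" using that by simp
  qed simp
  then have "join_cover X T s n U \<subseteq> ?J ` ({1..n} \<rightarrow>\<^sub>E U)"
    unfolding join_cover_def by blast
  moreover have "finite ({1..n} \<rightarrow>\<^sub>E U)" using assms by (intro finite_PiE) auto
  ultimately show ?thesis by (rule finite_subset[OF _ finite_imageI])
qed

lemma join_cover_covers:
  assumes "\<And>i y. y \<in> topspace X \<Longrightarrow> T (s i) y \<in> topspace X" "topspace X \<subseteq> \<Union>U"
  shows "topspace X \<subseteq> \<Union>(join_cover X T s n U)"
proof
  fix y assume y: "y \<in> topspace X"
  have "\<forall>i. \<exists>u. u \<in> U \<and> T (s i) y \<in> u" using assms y by blast
  then obtain W where W: "\<And>i. W i \<in> U \<and> T (s i) y \<in> W i" by metis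
  then have "y \<in> topspace X \<inter> (\<Inter>i\<in>{1..n}. act_pre X T (s i) (W i))"
    using y by (auto simp: act_pre_def)
  moreover have "W \<in> {1..n} \<rightarrow> U" using W by blast
  ultimately show "y \<in> \<Union>(join_cover X T s n U)" unfolding join_cover_def by blast
qed

lemma join_cover_covers_action:
  assumes "cont_action G X T" "\<forall>i. s i \<in> carrier G" "finite_open_cover X U"
  shows "finite (join_cover X T s n U)" "topspace X \<subseteq> \<Union>(join_cover X T s n U)"
proof -
  have "T (s i) y \<in> topspace X" if "y \<in> topspace X" for i y
    using cont_action_topspace[OF assms(1)] assms(2) that by blast
  then show "topspace X \<subseteq> \<Union>(join_cover X T s n U)"
    using assms(3) unfolding finite_open_cover_def by (intro join_cover_covers) auto
  show "finite (join_cover X T s n U)"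
    using assms(3) unfolding finite_open_cover_def by (intro finite_join_cover) auto
qed

section \<open>Growth rates\<close>

lemma ln_of_nat_nonneg: "0 \<le> ln (real (m::nat))"
  by (cases "m = 0") auto

lemma limsup_ln_div_nonneg:
  "0 \<le> limsup (\<lambda>n. ereal (ln (real (N n :: nat)) / real n))"
proof -
  have "limsup (\<lambda>n::nat. (0::ereal)) \<le> limsup (\<lambda>n. ereal (ln (real (N n)) / real n))"
    by (intro Limsup_mono always_eventually allI) (simp add: ln_of_nat_nonneg)
  then show ?thesis by (simp add: Limsup_const)
qed

lemma ln_le_ln_mult_power:
  fixes A B M d :: nat
  assumes "A \<le> B * M ^ d" "1 \<le> M"
  shows "ln (real A) \<le> ln (real B) + real d * ln (real M)"
proof (cases "A = 0")
  case True
  then show ?thesis using assms(2) ln_of_nat_nonneg[of B] by simp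
next
  case False
  then have "B \<ge> 1" using assms(1) by (cases "B = 0") auto
  have "real A \<le> real B * real M ^ d" using assms(1) by (metis of_nat_le_iff of_nat_mult of_nat_power)
  then have "ln (real A) \<le> ln (real B * real M ^ d)" using False by (intro ln_mono) auto
  also have "\<dots> = ln (real B) + real d * ln (real M)"
    using \<open>B \<ge> 1\<close> assms(2) by (simp add: ln_mult ln_realpow)
  finally show ?thesis .
qed

lemma limsup_ln_div_eq_0_if_le_poly:
  fixes A B :: "nat \<Rightarrow> nat"
  assumes le: "\<And>n. A n \<le> B n * (k * n + 1) ^ d"
    and B: "limsup (\<lambda>n. ereal (ln (real (B n)) / real n)) = 0"
  shows "limsup (\<lambda>n. ereal (ln (real (A n)) / real n)) = 0"
proof -
  let ?c = "\<lambda>n. real d * ln (real k * real n + 1) / real n"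
  have c: "?c \<longlonglongrightarrow> 0"
  proof (cases "k = 0")
    case False
    then have "k > 0" by simp
    then show ?thesis by real_asymp
  qed simp
  have "ln (real (A n)) / real n \<le> ln (real (B n)) / real n + ?c n" for n
  proof -
    have "ln (real (A n)) \<le> ln (real (B n)) + real d * ln (real (k * n + 1))"
      by (rule ln_le_ln_mult_power[OF le]) simp
    then show ?thesis by (simp add: add_divide_distrib[symmetric] divide_right_mono add.commute)
  qed
  then have "limsup (\<lambda>n. ereal (ln (real (A n)) / real n))
      \<le> limsup (\<lambda>n. ereal (ln (real (B n)) / real n) + ereal (?c n))"
    by (intro Limsup_mono always_eventually allI) simp
  also have "\<dots> \<le> limsup (\<lambda>n. ereal (ln (real (B n)) / real n)) + limsup (\<lambda>n. ereal (?c n))"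
    by (rule ereal_limsup_add_mono)
  also have "limsup (\<lambda>n. ereal (?c n)) = 0"
    using lim_imp_Limsup[OF _ tendsto_ereal[OF c]] by (simp add: zero_ereal_def)
  finally show ?thesis using B limsup_ln_div_nonneg[of A] by simp
qed

lemma limsup_ln_div_eq_0_if_le:
  fixes A B :: "nat \<Rightarrow> nat"
  assumes "\<And>n. A n \<le> B n" "limsup (\<lambda>n. ereal (ln (real (B n)) / real n)) = 0"
  shows "limsup (\<lambda>n. ereal (ln (real (A n)) / real n)) = 0"
proof (rule limsup_ln_div_eq_0_if_le_poly[where k = 0 and d = 0])
  show "A n \<le> B n * (0 * n + 1) ^ 0" for n using assms(1)[of n] by simp
qed (fact assms(2))

lemma limsup_ln_div_ge_if_doubly_exponential:
  fixes N :: "nat \<Rightarrow> nat"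
  assumes "\<And>j. 2 ^ 2 ^ j \<le> N (2 ^ Suc j)"
  shows "ereal (ln 2 / 2) \<le> limsup (\<lambda>n. ereal (ln (real (N n)) / real n))"
proof -
  let ?a = "\<lambda>n. ereal (ln (real (N n)) / real n)"
  have "ln 2 / 2 \<le> ?a (2 ^ Suc j)" for j
  proof -
    have "ln (real (2 ^ 2 ^ j)) \<le> ln (real (N (2 ^ Suc j)))"
      using assms[of j] by (intro ln_mono) simp_all
    then have "2 ^ j * ln 2 \<le> ln (real (N (2 ^ Suc j)))" by (simp add: ln_realpow)
    then show ?thesis by (simp add: field_simps)
  qed
  then have "limsup (\<lambda>j. ereal (ln 2 / 2)) \<le> limsup (?a \<circ> (\<lambda>j. 2 ^ Suc j))"
    by (intro Limsup_mono always_eventually) simp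
  also have "\<dots> \<le> limsup ?a"
    by (rule limsup_subseq_mono) (simp add: strict_mono_def power_strict_increasing)
  finally show ?thesis by (simp add: Limsup_const)
qed

section \<open>The Sauer--Shelah lemma\<close>

definition shatters :: "'a set set \<Rightarrow> 'a set \<Rightarrow> bool" where
  "shatters H F \<longleftrightarrow> (\<forall>A\<subseteq>F. \<exists>h\<in>H. h \<inter> F = A)"

lemma shatters_remove:
  assumes "x \<notin> F" "shatters ((\<lambda>h. h - {x}) ` H) F"
  shows "shatters H F"
  unfolding shatters_def
proof (intro allI impI)
  fix A assume "A \<subseteq> F"
  then obtain h where "h \<in> H" "(h - {x}) \<inter> F = A"
    using assms(2) unfolding shatters_def by blast
  then show "\<exists>h\<in>H. h \<inter> F = A" using assms(1) by blast
qed

lemma shatters_insert: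
  assumes "x \<notin> F" "shatters {h \<in> H. x \<notin> h \<and> insert x h \<in> H} F"
  shows "shatters H (insert x F)"
  unfolding shatters_def
proof (intro allI impI)
  fix A assume A: "A \<subseteq> insert x F"
  then have "A - {x} \<subseteq> F" by blast
  then obtain h where h: "h \<in> H" "x \<notin> h" "insert x h \<in> H" "h \<inter> F = A - {x}"
    using assms(2) unfolding shatters_def by blast
  show "\<exists>h\<in>H. h \<inter> insert x F = A"
  proof (cases "x \<in> A")
    case True
    then have "insert x h \<inter> insert x F = A" using h(4) A by auto
    then show ?thesis using h(3) by blast
  next
    case False
    then have "h \<inter> insert x F = A" using h(2,4) by auto
    then show ?thesis using h(1) by blast
  qed
qed

lemma card_eq_card_remove_add_card_pairs:
  assumes "finite H"
  shows "card H = card ((\<lambda>h. h - {x}) ` H) + card {h \<in> H. x \<notin> h \<and> insert x h \<in> H}"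
proof -
  define H0 where "H0 = {h \<in> H. x \<notin> h}"
  define H1 where "H1 = (\<lambda>h. h - {x}) ` {h \<in> H. x \<in> h}"
  have "card H = card H0 + card {h \<in> H. x \<in> h}"
    unfolding H0_def using assms by (subst card_Un_disjoint[symmetric]) (auto intro: arg_cong[of _ _ card])
  also have "card {h \<in> H. x \<in> h} = card H1"
    unfolding H1_def
  proof (rule card_image[symmetric], rule inj_onI)
    fix h h' assume "h \<in> {h \<in> H. x \<in> h}" "h' \<in> {h \<in> H. x \<in> h}" "h - {x} = h' - {x}"
    then show "h = h'" by (metis (no_types, lifting) insert_Diff mem_Collect_eq)
  qed
  also have "card H0 + card H1 = card (H0 \<union> H1) + card (H0 \<inter> H1)"
    by (rule card_Un_Int) (use assms in \<open>auto simp: H0_def H1_def\<close>)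
  also have "H0 \<union> H1 = (\<lambda>h. h - {x}) ` H"
  proof -
    have "(\<lambda>h. h - {x}) ` H = (\<lambda>h. h - {x}) ` H0 \<union> H1"
      unfolding H1_def image_Un[symmetric] by (rule arg_cong[where f = "image _"]) (auto simp: H0_def)
    also have "(\<lambda>h. h - {x}) ` H0 = H0" by (force simp: H0_def)
    finally show ?thesis by simp
  qed
  also have "H0 \<inter> H1 = {h \<in> H. x \<notin> h \<and> insert x h \<in> H}"
  proof (intro equalityI subsetI)
    fix h assume "h \<in> H0 \<inter> H1"
    then obtain h' where "h \<in> H" "x \<notin> h" "h' \<in> H" "x \<in> h'" "h = h' - {x}"
      unfolding H0_def H1_def by blast
    then show "h \<in> {h \<in> H. x \<notin> h \<and> insert x h \<in> H}" by (simp add: insert_absorb)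
  next
    fix h assume h: "h \<in> {h \<in> H. x \<notin> h \<and> insert x h \<in> H}"
    then have "h = insert x h - {x}" by simp
    then show "h \<in> H0 \<inter> H1" using h unfolding H0_def H1_def by blast
  qed
  finally show ?thesis .
qed

text \<open>Pajor's form of the Sauer--Shelah lemma.\<close>

lemma card_le_card_shattered:
  assumes "finite S" "H \<subseteq> Pow S"
  shows "card H \<le> card {F. F \<subseteq> S \<and> shatters H F}"
  using assms
proof (induction S arbitrary: H rule: finite_induct)
  case empty
  show ?case
  proof (cases "H = {}")
    case False
    then have "{} \<in> {F. F \<subseteq> {} \<and> shatters H F}" by (auto simp: shatters_def)
    moreover have "finite {F. F \<subseteq> {} \<and> shatters H F}"
      by (rule finite_subset[of _ "Pow {}"]) auto
    ultimately have "1 \<le> card {F. F \<subseteq> {} \<and> shatters H F}"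
      by (metis One_nat_def Suc_leI card_gt_0_iff empty_iff)
    moreover have "card H \<le> 1"
      using empty card_mono[of "{{}}" H] by auto
    ultimately show ?thesis by (rule le_trans[rotated])
  qed simp
next
  case (insert x S)
  let ?H1 = "(\<lambda>h. h - {x}) ` H" and ?H2 = "{h \<in> H. x \<notin> h \<and> insert x h \<in> H}"
  let ?Sh1 = "{F. F \<subseteq> S \<and> shatters ?H1 F}" and ?Sh2 = "{F. F \<subseteq> S \<and> shatters ?H2 F}"
  have "finite H"
    using insert.prems finite_subset[of H "Pow (insert x S)"] insert.hyps(1) by simp
  then have "card H = card ?H1 + card ?H2" by (rule card_eq_card_remove_add_card_pairs)
  also have "\<dots> \<le> card ?Sh1 + card ?Sh2"
    using insert.prems by (intro add_mono insert.IH) auto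
  also have "card ?Sh2 = card (insert x ` ?Sh2)"
  proof -
    have "inj_on (insert x) ?Sh2"
    proof (rule inj_onI)
      fix F1 F2 assume "F1 \<in> ?Sh2" "F2 \<in> ?Sh2" "insert x F1 = insert x F2"
      moreover have "x \<notin> F1" "x \<notin> F2" using calculation(1,2) insert.hyps(2) by auto
      ultimately show "F1 = F2" by (metis insert_ident)
    qed
    then show ?thesis by (simp add: card_image)
  qed
  also have "card ?Sh1 + card (insert x ` ?Sh2) = card (?Sh1 \<union> insert x ` ?Sh2)"
    using insert.hyps by (intro card_Un_disjoint[symmetric]) auto
  also have "\<dots> \<le> card {F. F \<subseteq> insert x S \<and> shatters H F}"
  proof (rule card_mono)
    show "finite {F. F \<subseteq> insert x S \<and> shatters H F}" using insert.hyps(1) by simp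
    have "shatters H F" if "F \<in> ?Sh1" for F
    proof (rule shatters_remove[of x])
      show "x \<notin> F" "shatters ?H1 F" using that insert.hyps(2) by auto
    qed
    moreover have "shatters H (insert x F)" if "F \<in> ?Sh2" for F
    proof (rule shatters_insert)
      show "x \<notin> F" "shatters ?H2 F" using that insert.hyps(2) by auto
    qed
    ultimately show "?Sh1 \<union> insert x ` ?Sh2 \<subseteq> {F. F \<subseteq> insert x S \<and> shatters H F}"
      by auto
  qed
  finally show ?case .
qed

lemma card_subsets_card_less_le:
  assumes "finite Q"
  shows "card {F. F \<subseteq> Q \<and> card F < d} \<le> (card Q + 1) ^ d"
proof -
  let ?L = "{xs. set xs \<subseteq> insert None (Some ` Q) \<and> length xs = d}"
  have "{F. F \<subseteq> Q \<and> card F < d} \<subseteq> (\<lambda>xs. {q. Some q \<in> set xs}) ` ?L"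
  proof
    fix F assume F: "F \<in> {F. F \<subseteq> Q \<and> card F < d}"
    then obtain xs where xs: "set xs = F" "distinct xs"
      using assms finite_subset finite_distinct_list by (metis mem_Collect_eq)
    then have "length xs < d" using F distinct_card by fastforce
    then have "map Some xs @ replicate (d - length xs) None \<in> ?L" using xs F by auto
    moreover have "F = {q. Some q \<in> set (map Some xs @ replicate (d - length xs) None)}"
      using xs by auto
    ultimately show "F \<in> (\<lambda>xs. {q. Some q \<in> set xs}) ` ?L" by blast
  qed
  then have "card {F. F \<subseteq> Q \<and> card F < d} \<le> card ((\<lambda>xs. {q. Some q \<in> set xs}) ` ?L)"
    by (rule card_mono[rotated]) (auto intro!: finite_imageI finite_lists_length_eq simp: assms)
  also have "\<dots> \<le> card ?L" by (rule card_image_le) (auto intro!: finite_lists_length_eq simp: assms)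
  also have "\<dots> = (card Q + 1) ^ d"
    using assms by (subst card_lists_length_eq) (simp_all add: card_image)
  finally show ?thesis .
qed

lemma card_le_power_if_shattered_small:
  assumes "finite S" "H \<subseteq> Pow S" "\<And>F. F \<subseteq> S \<Longrightarrow> shatters H F \<Longrightarrow> card F < d"
  shows "card H \<le> (card S + 1) ^ d"
proof -
  have "card H \<le> card {F. F \<subseteq> S \<and> shatters H F}"
    by (rule card_le_card_shattered[OF assms(1,2)])
  also have "\<dots> \<le> card {F. F \<subseteq> S \<and> card F < d}"
    using assms by (intro card_mono) auto
  also have "\<dots> \<le> (card S + 1) ^ d"
    by (rule card_subsets_card_less_le[OF assms(1)])
  finally show ?thesis .
qed

section \<open>Independence sets and sequence entropy\<close>

lemma indep_setD:
  fixes \<omega> :: "'g \<Rightarrow> nat"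
  assumes "indep_set G X T A1 A2 M" "F \<subseteq> M" "finite F" "F \<noteq> {}" "\<omega> \<in> F \<rightarrow> {1, 2}"
  shows "(\<Inter>s\<in>F. act_pre X T s (if \<omega> s = 1 then A1 else A2)) \<noteq> {}"
  using assms unfolding indep_set_def by simp

lemma indep_set_carrier: "indep_set G X T A1 A2 M \<Longrightarrow> M \<subseteq> carrier G"
  unfolding indep_set_def by (rule conjunct1)

lemma indep_set_subset: "indep_set G X T A1 A2 M \<Longrightarrow> I \<subseteq> M \<Longrightarrow> indep_set G X T A1 A2 I"
  unfolding indep_set_def by (meson subset_trans)

definition pattern :: "('k \<Rightarrow> 'z set) \<Rightarrow> 'k set \<Rightarrow> 'z \<Rightarrow> 'k set" where
  "pattern C K y = {k \<in> K. y \<in> C k}"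

lemma indep_set_if_shattered:
  assumes act: "cont_action G X T" and cov: "topspace X \<subseteq> A1 \<union> A2" and Q: "Q \<subseteq> carrier G"
    and F: "F \<subseteq> Q" "shatters (pattern (\<lambda>q. act_pre X T q A1) Q ` topspace X) F"
  shows "indep_set G X T A1 A2 F"
  unfolding indep_set_def
proof (intro conjI allI impI ballI)
  show "F \<subseteq> carrier G" using F(1) Q by blast
  fix F' \<omega> assume F': "F' \<subseteq> F" "finite F'" "F' \<noteq> {}" and \<omega>: "\<omega> \<in> F' \<rightarrow> {1::nat, 2}"
  have "{t \<in> F'. \<omega> t = 1} \<subseteq> F" using F'(1) by blast
  then obtain y where y: "y \<in> topspace X"
    "pattern (\<lambda>q. act_pre X T q A1) Q y \<inter> F = {t \<in> F'. \<omega> t = 1}"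
    using F(2) unfolding shatters_def by blast
  have "y \<in> act_pre X T t (if \<omega> t = 1 then A1 else A2)" if t: "t \<in> F'" for t
  proof (cases "\<omega> t = 1")
    case True
    then show ?thesis using y t F(1) F'(1) by (auto simp: pattern_def)
  next
    case False
    then have "T t y \<notin> A1" using y t F(1) F'(1) by (auto simp: pattern_def act_pre_def)
    moreover have "T t y \<in> topspace X"
      using cont_action_topspace[OF act] t F(1) F'(1) Q y(1) by blast
    ultimately show ?thesis using False cov y(1) by (auto simp: act_pre_def)
  qed
  then show "(\<Inter>t\<in>F'. act_pre X T t (if \<omega> t = 1 then A1 else A2)) \<noteq> {}" by blast
qed

lemma card_patterns_le_if_not_arb_large_indep:
  assumes act: "cont_action G X T" and cov: "topspace X \<subseteq> A1 \<union> A2"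
    and "\<not> arb_large_indep G X T A1 A2"
  obtains d where "\<And>Q. finite Q \<Longrightarrow> Q \<subseteq> carrier G \<Longrightarrow>
    card (pattern (\<lambda>q. act_pre X T q A1) Q ` topspace X) \<le> (card Q + 1) ^ d"
proof -
  obtain d where d: "\<And>M. finite M \<Longrightarrow> d \<le> card M \<Longrightarrow> \<not> indep_set G X T A1 A2 M"
    using assms(3) unfolding arb_large_indep_def by blast
  have "card (pattern (\<lambda>q. act_pre X T q A1) Q ` topspace X) \<le> (card Q + 1) ^ d"
    if Q: "finite Q" "Q \<subseteq> carrier G" for Q
  proof (rule card_le_power_if_shattered_small[OF Q(1)])
    show "pattern (\<lambda>q. act_pre X T q A1) Q ` topspace X \<subseteq> Pow Q"
      by (auto simp: pattern_def)
    fix F assume F: "F \<subseteq> Q" "shatters (pattern (\<lambda>q. act_pre X T q A1) Q ` topspace X) F"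
    then have "indep_set G X T A1 A2 F" by (rule indep_set_if_shattered[OF act cov Q(2)])
    then show "card F < d"
      using d[of F] F(1) Q(1) finite_subset by (meson not_le)
  qed
  then show thesis by (rule that)
qed

lemma Ncov_join_cover_ge_indep:
  assumes act: "cont_action G X T" and s: "\<forall>i. s i \<in> carrier G" and "disjnt A1 A2"
    and I: "indep_set G X T A1 A2 I" "finite I" "I \<noteq> {}" "I \<subseteq> s ` {1..n}"
  shows "2 ^ card I \<le> Ncov X (join_cover X T s n {topspace X - A1, topspace X - A2})"
proof -
  let ?U = "{topspace X - A1, topspace X - A2}"
  have "\<forall>B\<in>Pow I. \<exists>y. y \<in> topspace X \<and> (\<forall>t\<in>I. T t y \<in> (if t \<in> B then A1 else A2))"
  proof
    fix B assume "B \<in> Pow I"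
    define \<omega> where "\<omega> t = (if t \<in> B then 1 else 2::nat)" for t
    have "\<omega> \<in> I \<rightarrow> {1, 2}" by (simp add: \<omega>_def)
    then have "(\<Inter>t\<in>I. act_pre X T t (if \<omega> t = 1 then A1 else A2)) \<noteq> {}"
      by (rule indep_setD[OF I(1) order_refl I(2,3)])
    moreover have "(if \<omega> t = 1 then A1 else A2) = (if t \<in> B then A1 else A2)" for t
      by (simp add: \<omega>_def)
    ultimately obtain y where "y \<in> (\<Inter>t\<in>I. act_pre X T t (if t \<in> B then A1 else A2))" by auto
    then have "y \<in> topspace X" "\<forall>t\<in>I. T t y \<in> (if t \<in> B then A1 else A2)"
      using I(3) by (auto simp: act_pre_def)
    then show "\<exists>y. y \<in> topspace X \<and> (\<forall>t\<in>I. T t y \<in> (if t \<in> B then A1 else A2))"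
      by blast
  qed
  from bchoice[OF this] obtain y
    where y: "\<forall>B\<in>Pow I. y B \<in> topspace X \<and> (\<forall>t\<in>I. T t (y B) \<in> (if t \<in> B then A1 else A2))"
    by blast
  have "card (Pow I) \<le> Ncov X (join_cover X T s n ?U)"
  proof (rule card_le_Ncov_if_separated)
    show "finite (join_cover X T s n ?U)" by (rule finite_join_cover) simp
    show "topspace X \<subseteq> \<Union>(join_cover X T s n ?U)"
      using assms(3) cont_action_topspace[OF act] s
      by (intro join_cover_covers) (auto simp: disjnt_def)
    show "y ` Pow I \<subseteq> topspace X" using y by blast
    fix B B' c assume B: "B \<in> Pow I" "B' \<in> Pow I" and c: "c \<in> join_cover X T s n ?U" "y B \<in> c" "y B' \<in> c"
    show "B = B'"
    proof (rule ccontr)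
      assume "B \<noteq> B'"
      then obtain t where t: "t \<in> I" "(t \<in> B) \<noteq> (t \<in> B')" using B by blast
      then obtain i where i: "i \<in> {1..n}" "s i = t" using I(4) by blast
      obtain W where W: "W \<in> {1..n} \<rightarrow> ?U" "c = topspace X \<inter> (\<Inter>i\<in>{1..n}. act_pre X T (s i) (W i))"
        using c(1) by (rule join_cover_memE)
      have "T t (y B) \<in> W i" "T t (y B') \<in> W i"
        using c(2,3) W(2) i unfolding act_pre_def by auto
      moreover have "T t (y B) \<in> (if t \<in> B then A1 else A2)" "T t (y B') \<in> (if t \<in> B' then A1 else A2)"
        using y B t(1) by auto
      moreover have "W i \<in> ?U" using W(1) i(1) by (rule funcset_mem)
      ultimately show False using t(2) by auto
    qed
  qed
  then show ?thesis using I(2) by (simp add: card_Pow)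
qed

lemma dyadic_block_sequence:
  fixes e :: "nat \<Rightarrow> nat \<Rightarrow> 'a"
  obtains s where "\<And>m. \<exists>j i. i < 2 ^ j \<and> s m = e j i"
    and "\<And>j i. i < 2 ^ j \<Longrightarrow> s (2 ^ j + 1 + i) = e j i"
proof
  define s where "s m = e (floor_log (m - 1)) (m - 1 - 2 ^ floor_log (m - 1))" for m
  show "\<exists>j i. i < 2 ^ j \<and> s m = e j i" for m
  proof (intro exI conjI)
    show "m - 1 - 2 ^ floor_log (m - 1) < 2 ^ floor_log (m - 1)"
      using floor_log_exp2_gt[of "m - 1"] by linarith
  qed (simp add: s_def)
  show "s (2 ^ j + 1 + i) = e j i" if "i < 2 ^ j" for j i
    using that floor_log_eqI[of "2 ^ j + i" j] unfolding s_def by simp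
qed

lemma arb_large_indep_dyadic_blocks:
  assumes "arb_large_indep G X T A1 A2"
  obtains e where "\<And>j. indep_set G X T A1 A2 (e j ` {..<(2::nat) ^ j})"
    "\<And>j. card (e j ` {..<(2::nat) ^ j}) = 2 ^ j"
proof -
  have "\<exists>e. indep_set G X T A1 A2 (e ` {..<(2::nat) ^ j}) \<and> card (e ` {..<(2::nat) ^ j}) = 2 ^ j"
    for j :: nat
  proof -
    obtain M where M: "finite M" "2 ^ j \<le> card M" "indep_set G X T A1 A2 M"
      using assms unfolding arb_large_indep_def by blast
    obtain I where I: "I \<subseteq> M" "card I = 2 ^ j" "finite I"
      by (rule obtain_subset_with_card_n[OF M(2)])
    then obtain e where "bij_betw e {..<(2::nat) ^ j} I"
      using ex_bij_betw_nat_finite[OF I(3)] by (metis atLeast0LessThan)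
    moreover have "indep_set G X T A1 A2 I" using indep_set_subset[OF M(3) I(1)] .
    ultimately show ?thesis using I(2) by (metis bij_betw_imp_surj_on)
  qed
  then obtain e where e: "\<And>j. indep_set G X T A1 A2 (e j ` {..<(2::nat) ^ j}) \<and>
      card (e j ` {..<(2::nat) ^ j}) = 2 ^ j"
    by metis
  show thesis by (rule that[of e]) (simp_all add: e)
qed

lemma not_arb_large_indep_if_null_action:
  assumes act: "cont_action G X T" and null: "null_action G X T"
    and A: "closedin X A1" "closedin X A2" "disjnt A1 A2"
  shows "\<not> arb_large_indep G X T A1 A2"
proof
  assume arb: "arb_large_indep G X T A1 A2"
  obtain e where e_indep: "\<And>j. indep_set G X T A1 A2 (e j ` {..<(2::nat) ^ j})"
    and e_card: "\<And>j. card (e j ` {..<(2::nat) ^ j}) = 2 ^ j"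
    by (rule arb_large_indep_dyadic_blocks[OF arb]) (rule that)
  obtain s :: "nat \<Rightarrow> _" where s_val: "\<And>m. \<exists>j i. i < 2 ^ j \<and> s m = e j i"
    and s_block: "\<And>j i. i < 2 ^ j \<Longrightarrow> s (2 ^ j + 1 + i) = e j i"
    by (rule dyadic_block_sequence[of e]) (rule that)
  have s: "\<forall>m. s m \<in> carrier G"
  proof
    fix m
    obtain j i where "i < 2 ^ j" "s m = e j i" using s_val by blast
    then have "s m \<in> e j ` {..<2 ^ j}" by simp
    then show "s m \<in> carrier G" by (rule subsetD[OF indep_set_carrier[OF e_indep]])
  qed
  let ?U = "{topspace X - A1, topspace X - A2}"
  have "finite_open_cover X ?U"
    using A unfolding finite_open_cover_def disjnt_def by (auto intro: openin_diff)
  then have "seq_entropy X T s ?U = 0" using null s unfolding null_action_def by blast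
  moreover have "2 ^ 2 ^ j \<le> Ncov X (join_cover X T s (2 ^ Suc j) ?U)" for j
  proof -
    have "e j ` {..<2 ^ j} \<subseteq> s ` {1..2 ^ Suc j}"
    proof
      fix t assume "t \<in> e j ` {..<2 ^ j}"
      then obtain i where "i < 2 ^ j" "t = e j i" by blast
      then show "t \<in> s ` {1..2 ^ Suc j}"
        using s_block by (intro image_eqI[of _ _ "2 ^ j + 1 + i"]) auto
    qed
    then have "2 ^ card (e j ` {..<2 ^ j}) \<le> Ncov X (join_cover X T s (2 ^ Suc j) ?U)"
      using e_indep[of j] e_card[of j] by (intro Ncov_join_cover_ge_indep[OF act s A(3)]) auto
    then show ?thesis using e_card[of j] by simp
  qed
  then have "ereal (ln 2 / 2) \<le> seq_entropy X T s ?U"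
    unfolding seq_entropy_def by (rule limsup_ln_div_ge_if_doubly_exponential)
  ultimately show False by simp
qed

lemma join_cover_preimage_refines:
  assumes p: "continuous_map Z X p"
    and equiv: "\<And>g y. g \<in> carrier G \<Longrightarrow> y \<in> topspace Z \<Longrightarrow> p (TZ g y) = T g (p y)"
    and s: "\<forall>i. s i \<in> carrier G"
    and d: "d \<in> join_cover Z TZ s n ((\<lambda>v. {y \<in> topspace Z. p y \<in> v}) ` V)"
  shows "\<exists>c\<in>join_cover X T s n V. p ` d \<subseteq> c"
proof -
  obtain W where W: "W \<in> {1..n} \<rightarrow> (\<lambda>v. {y \<in> topspace Z. p y \<in> v}) ` V"
    "d = topspace Z \<inter> (\<Inter>i\<in>{1..n}. act_pre Z TZ (s i) (W i))"
    using d by (rule join_cover_memE)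
  have "\<forall>i\<in>{1..n}. \<exists>v. v \<in> V \<and> W i = {y \<in> topspace Z. p y \<in> v}"
    using W(1) by blast
  from bchoice[OF this] obtain v where v: "\<forall>i\<in>{1..n}. v i \<in> V \<and> W i = {y \<in> topspace Z. p y \<in> v i}"
    by blast
  let ?c = "topspace X \<inter> (\<Inter>i\<in>{1..n}. act_pre X T (s i) (v i))"
  have "?c \<in> join_cover X T s n V" using v by (intro join_cover_memI) auto
  moreover have "p ` d \<subseteq> ?c"
  proof
    fix x assume "x \<in> p ` d"
    then obtain y where y: "y \<in> d" "x = p y" by blast
    then have "y \<in> topspace Z" using W(2) by blast
    moreover have "p y \<in> topspace X"
      using calculation by (rule funcset_mem[OF continuous_map_funspace[OF p]])
    ultimately show "x \<in> ?c"
      using y W(2) v equiv s unfolding act_pre_def by auto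
  qed
  ultimately show ?thesis by blast
qed

lemma null_action_factor:
  assumes actZ: "cont_action G Z TZ" and p: "continuous_map Z X p" "p ` topspace Z = topspace X"
    and equiv: "\<And>g y. g \<in> carrier G \<Longrightarrow> y \<in> topspace Z \<Longrightarrow> p (TZ g y) = T g (p y)"
    and null: "null_action G Z TZ"
  shows "null_action G X T"
  unfolding null_action_def
proof (intro allI impI)
  fix s :: "nat \<Rightarrow> _" and V assume s: "\<forall>n. s n \<in> carrier G" and V: "finite_open_cover X V"
  define U where "U = (\<lambda>v. {y \<in> topspace Z. p y \<in> v}) ` V"
  have "topspace Z \<subseteq> \<Union>U"
  proof
    fix y assume y: "y \<in> topspace Z"
    then have "p y \<in> topspace X" by (rule funcset_mem[OF continuous_map_funspace[OF p(1)]])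
    then obtain v where "v \<in> V" "p y \<in> v"
      using V unfolding finite_open_cover_def by blast
    then show "y \<in> \<Union>U" using y unfolding U_def by blast
  qed
  then have U: "finite_open_cover Z U"
    using V unfolding finite_open_cover_def U_def
    by (auto intro: openin_continuous_map_preimage[OF p(1)])
  have le: "Ncov X (join_cover X T s n V) \<le> Ncov Z (join_cover Z TZ s n U)" for n
  proof (rule Ncov_le_Ncov_if_image_refines[where p = p])
    show "finite (join_cover Z TZ s n U)" "topspace Z \<subseteq> \<Union>(join_cover Z TZ s n U)"
      by (rule join_cover_covers_action[OF actZ s U])+
    show "topspace X \<subseteq> p ` topspace Z" using p(2) by simp
    show "\<exists>c\<in>join_cover X T s n V. p ` d \<subseteq> c" if "d \<in> join_cover Z TZ s n U" for d
      using p(1) equiv s that unfolding U_def by (rule join_cover_preimage_refines)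
  qed
  have "seq_entropy Z TZ s U = 0" using null s U unfolding null_action_def by blast
  then show "seq_entropy X T s V = 0"
    unfolding seq_entropy_def by (rule limsup_ln_div_eq_0_if_le[OF le])
qed

section \<open>Extensions whose fibres are separated by clopen sets\<close>

lemma compactin_indexed_subcover:
  assumes "compactin X S" "\<And>w. w \<in> S \<Longrightarrow> openin X (B w) \<and> w \<in> B w"
  obtains W where "finite W" "W \<subseteq> S" "S \<subseteq> (\<Union>w\<in>W. B w)"
proof -
  have "S \<subseteq> \<Union>(B ` S)" "\<And>U. U \<in> B ` S \<Longrightarrow> openin X U" using assms(2) by blast+
  then obtain \<F> where \<F>: "finite \<F>" "\<F> \<subseteq> B ` S" "S \<subseteq> \<Union>\<F>"
    using compactinD[OF assms(1)] by meson
  then obtain W where "W \<subseteq> S" "finite W" "\<F> = B ` W"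
    by (meson finite_subset_image)
  with \<F> show thesis using that by blast
qed

lemma pattern_eq_subset:
  "pattern C K y = pattern C K z \<Longrightarrow> K' \<subseteq> K \<Longrightarrow> pattern C K' y = pattern C K' z"
  unfolding pattern_def by blast

lemma pattern_class_subset:
  assumes "y \<in> {y \<in> topspace Z. p y \<in> a \<and> pattern C K' y = pattern C K' z}" "K' \<subseteq> K"
  shows "{y' \<in> topspace Z. p y' \<in> a \<and> pattern C K y' = pattern C K y}
    \<subseteq> {y \<in> topspace Z. p y \<in> a \<and> pattern C K' y = pattern C K' z}"
proof
  fix y' assume y': "y' \<in> {y' \<in> topspace Z. p y' \<in> a \<and> pattern C K y' = pattern C K y}"
  then have "pattern C K y' = pattern C K y" by blast
  then have "pattern C K' y' = pattern C K' y" using assms(2) by (rule pattern_eq_subset)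
  also have "\<dots> = pattern C K' z" using assms(1) by blast
  finally show "y' \<in> {y \<in> topspace Z. p y \<in> a \<and> pattern C K' y = pattern C K' z}" using y' by blast
qed

lemma openin_pattern_eq:
  assumes "finite K" "\<And>k. k \<in> K \<Longrightarrow> openin Z (C k) \<and> closedin Z (C k)"
  shows "openin Z {y \<in> topspace Z. pattern C K y = pattern C K z}"
proof -
  have "{y \<in> topspace Z. pattern C K y = pattern C K z}
      = (\<Inter>k\<in>K. if z \<in> C k then C k else topspace Z - C k) \<inter> topspace Z"
    by (auto simp: pattern_def split: if_splits)
  also have "openin Z \<dots>"
    using assms by (intro openin_INT) (auto intro: openin_diff)
  finally show ?thesis .
qed

context
  fixes Z :: "'z topology" and X :: "'x topology" and p :: "'z \<Rightarrow> 'x"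
    and C :: "'k \<Rightarrow> 'z set" and Kall :: "'k set"
  assumes compact: "compact_space Z" and Hausdorff: "Hausdorff_space X"
    and p: "continuous_map Z X p"
    and clopen: "\<And>k. k \<in> Kall \<Longrightarrow> openin Z (C k) \<and> closedin Z (C k)"
    and separating: "\<And>z z'. z \<in> topspace Z \<Longrightarrow> z' \<in> topspace Z \<Longrightarrow> p z = p z' \<Longrightarrow> z \<noteq> z'
      \<Longrightarrow> \<exists>k\<in>Kall. (z \<in> C k) \<noteq> (z' \<in> C k)"
begin

lemma p_topspace: "y \<in> topspace Z \<Longrightarrow> p y \<in> topspace X"
  by (rule funcset_mem[OF continuous_map_funspace[OF p]])

lemma pattern_separation:
  assumes z: "z \<in> topspace Z" and w: "w \<in> topspace Z" "w \<noteq> z"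
  shows "\<exists>a K Q. openin X a \<and> p z \<in> a \<and> finite K \<and> K \<subseteq> Kall \<and> openin Z Q \<and> w \<in> Q \<and>
           (\<forall>y\<in>Q. p y \<in> a \<longrightarrow> pattern C K y \<noteq> pattern C K z)"
proof (cases "p w = p z")
  case True
  then obtain k where k: "k \<in> Kall" "(w \<in> C k) \<noteq> (z \<in> C k)"
    using separating[OF w(1) z] w(2) by blast
  let ?Q = "{y \<in> topspace Z. pattern C {k} y = pattern C {k} w}"
  have "openin Z ?Q" using clopen k(1) by (intro openin_pattern_eq) auto
  moreover have "pattern C {k} w \<noteq> pattern C {k} z" using k(2) by (auto simp: pattern_def)
  ultimately show ?thesis
    using k(1) w(1) p_topspace z
    by (intro exI[of _ "topspace X"] exI[of _ "{k}"] exI[of _ ?Q]) auto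
next
  case False
  moreover have "p z \<in> topspace X" "p w \<in> topspace X"
    using z w(1) p_topspace by auto
  ultimately obtain a b where ab: "openin X a" "openin X b" "p z \<in> a" "p w \<in> b" "disjnt a b"
    using Hausdorff unfolding Hausdorff_space_def by metis
  let ?Q = "{y \<in> topspace Z. p y \<in> b}"
  have "openin Z ?Q" by (rule openin_continuous_map_preimage[OF p ab(2)])
  then show ?thesis
    using ab w(1) unfolding disjnt_def
    by (intro exI[of _ a] exI[of _ "{}"] exI[of _ ?Q]) auto
qed

lemma pattern_nbhd_subset:
  assumes u: "openin Z u" "z \<in> u"
  obtains a K where "openin X a" "p z \<in> a" "finite K" "K \<subseteq> Kall"
    "{y \<in> topspace Z. p y \<in> a \<and> pattern C K y = pattern C K z} \<subseteq> u"
proof -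
  let ?S = "topspace Z - u"
  have z: "z \<in> topspace Z" using u openin_subset by blast
  have "\<forall>w\<in>?S. \<exists>a K Q. openin X a \<and> p z \<in> a \<and> finite K \<and> K \<subseteq> Kall \<and> openin Z Q \<and> w \<in> Q \<and>
           (\<forall>y\<in>Q. p y \<in> a \<longrightarrow> pattern C K y \<noteq> pattern C K z)"
    using pattern_separation[OF z] u(2) by blast
  from bchoice[OF this] obtain a where "\<forall>w\<in>?S. \<exists>K Q. openin X (a w) \<and> p z \<in> a w \<and> finite K \<and>
      K \<subseteq> Kall \<and> openin Z Q \<and> w \<in> Q \<and> (\<forall>y\<in>Q. p y \<in> a w \<longrightarrow> pattern C K y \<noteq> pattern C K z)"
    by blast
  from bchoice[OF this] obtain K where "\<forall>w\<in>?S. \<exists>Q. openin X (a w) \<and> p z \<in> a w \<and> finite (K w) \<and>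
      K w \<subseteq> Kall \<and> openin Z Q \<and> w \<in> Q \<and> (\<forall>y\<in>Q. p y \<in> a w \<longrightarrow> pattern C (K w) y \<noteq> pattern C (K w) z)"
    by blast
  from bchoice[OF this] obtain Q where aKQ: "\<forall>w\<in>?S. openin X (a w) \<and> p z \<in> a w \<and> finite (K w) \<and>
      K w \<subseteq> Kall \<and> openin Z (Q w) \<and> w \<in> Q w \<and>
      (\<forall>y\<in>Q w. p y \<in> a w \<longrightarrow> pattern C (K w) y \<noteq> pattern C (K w) z)"
    by blast
  have S: "compactin Z ?S" using u by (intro closedin_compact_space[OF compact]) auto
  have Q: "openin Z (Q w) \<and> w \<in> Q w" if "w \<in> ?S" for w using aKQ that by blast
  obtain W where W: "finite W" "W \<subseteq> ?S" "?S \<subseteq> (\<Union>w\<in>W. Q w)"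
    using S Q by (rule compactin_indexed_subcover)
  let ?a = "(\<Inter>w\<in>W. a w) \<inter> topspace X"
  let ?K = "\<Union>w\<in>W. K w"
  show thesis
  proof
    show "openin X ?a" using W aKQ by (intro openin_INT) auto
    show "p z \<in> ?a" using W aKQ z p_topspace by auto
    show "finite ?K" "?K \<subseteq> Kall" using W aKQ by auto
    show "{y \<in> topspace Z. p y \<in> ?a \<and> pattern C ?K y = pattern C ?K z} \<subseteq> u"
    proof
      fix y assume y: "y \<in> {y \<in> topspace Z. p y \<in> ?a \<and> pattern C ?K y = pattern C ?K z}"
      show "y \<in> u"
      proof (rule ccontr)
        assume "y \<notin> u"
        then obtain w where w: "w \<in> W" "y \<in> Q w" using y W(3) by blast
        have "pattern C ?K y = pattern C ?K z" using y by blast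
        moreover have "K w \<subseteq> ?K" using w(1) by blast
        ultimately have "pattern C (K w) y = pattern C (K w) z" by (rule pattern_eq_subset)
        then show False using aKQ w W(2) y by blast
      qed
    qed
  qed
qed

lemma pattern_nbhd_in_cover:
  assumes U: "finite_open_cover Z U" and z: "z \<in> topspace Z"
  shows "\<exists>u a K. u \<in> U \<and> openin X a \<and> p z \<in> a \<and> finite K \<and> K \<subseteq> Kall \<and>
    {y \<in> topspace Z. p y \<in> a \<and> pattern C K y = pattern C K z} \<subseteq> u"
proof -
  obtain u where u: "u \<in> U" "z \<in> u" using U z unfolding finite_open_cover_def by blast
  moreover have "openin Z u" using U u(1) unfolding finite_open_cover_def by blast
  then obtain a K where "openin X a" "p z \<in> a" "finite K" "K \<subseteq> Kall"
    "{y \<in> topspace Z. p y \<in> a \<and> pattern C K y = pattern C K z} \<subseteq> u"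
    by (rule pattern_nbhd_subset[OF _ u(2)]) (rule that)
  ultimately show ?thesis by blast
qed

lemma uniform_pattern_nbhds:
  assumes U: "finite_open_cover Z U"
  obtains K where "finite K" "K \<subseteq> Kall"
    "\<forall>y\<in>topspace Z. \<exists>a u. openin X a \<and> p y \<in> a \<and> u \<in> U \<and>
        {y' \<in> topspace Z. p y' \<in> a \<and> pattern C K y' = pattern C K y} \<subseteq> u"
proof -
  have "\<forall>z\<in>topspace Z. \<exists>u a K. u \<in> U \<and> openin X a \<and> p z \<in> a \<and> finite K \<and> K \<subseteq> Kall \<and>
      {y \<in> topspace Z. p y \<in> a \<and> pattern C K y = pattern C K z} \<subseteq> u"
    by (intro ballI pattern_nbhd_in_cover[OF U])
  from bchoice[OF this] obtain u where
    "\<forall>z\<in>topspace Z. \<exists>a K. u z \<in> U \<and> openin X a \<and> p z \<in> a \<and>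
      finite K \<and> K \<subseteq> Kall \<and> {y \<in> topspace Z. p y \<in> a \<and> pattern C K y = pattern C K z} \<subseteq> u z"
    by blast
  from bchoice[OF this] obtain a where "\<forall>z\<in>topspace Z. \<exists>K. u z \<in> U \<and> openin X (a z) \<and> p z \<in> a z \<and>
      finite K \<and> K \<subseteq> Kall \<and> {y \<in> topspace Z. p y \<in> a z \<and> pattern C K y = pattern C K z} \<subseteq> u z"
    by blast
  from bchoice[OF this] obtain Kz where uaK: "\<forall>z\<in>topspace Z. u z \<in> U \<and> openin X (a z) \<and> p z \<in> a z \<and>
      finite (Kz z) \<and> Kz z \<subseteq> Kall \<and>
      {y \<in> topspace Z. p y \<in> a z \<and> pattern C (Kz z) y = pattern C (Kz z) z} \<subseteq> u z"
    by blast
  define N where "N z = {y \<in> topspace Z. p y \<in> a z \<and> pattern C (Kz z) y = pattern C (Kz z) z}" for z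
  have N: "openin Z (N z) \<and> z \<in> N z" if "z \<in> topspace Z" for z
  proof
    have "N z = {y \<in> topspace Z. p y \<in> a z} \<inter> {y \<in> topspace Z. pattern C (Kz z) y = pattern C (Kz z) z}"
      unfolding N_def by blast
    also have "openin Z \<dots>"
      using uaK that clopen
      by (intro openin_Int openin_continuous_map_preimage[OF p] openin_pattern_eq) auto
    finally show "openin Z (N z)" .
    show "z \<in> N z" using uaK that unfolding N_def by blast
  qed
  obtain Z0 where Z0: "finite Z0" "Z0 \<subseteq> topspace Z" "topspace Z \<subseteq> (\<Union>z\<in>Z0. N z)"
    using compact[unfolded compact_space_def] N by (rule compactin_indexed_subcover)
  let ?K = "\<Union>z\<in>Z0. Kz z"
  show thesis
  proof
    show "finite ?K" "?K \<subseteq> Kall" using Z0 uaK by auto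
    show "\<forall>y\<in>topspace Z. \<exists>a u. openin X a \<and> p y \<in> a \<and> u \<in> U \<and>
        {y' \<in> topspace Z. p y' \<in> a \<and> pattern C ?K y' = pattern C ?K y} \<subseteq> u"
    proof
      fix y assume "y \<in> topspace Z"
      then obtain z where z: "z \<in> Z0" "y \<in> N z" using Z0(3) by blast
      have "z \<in> topspace Z" using z(1) Z0(2) by blast
      then have "N z \<subseteq> u z" "u z \<in> U" "openin X (a z)" using uaK unfolding N_def by auto
      moreover have "{y' \<in> topspace Z. p y' \<in> a z \<and> pattern C ?K y' = pattern C ?K y} \<subseteq> N z"
        unfolding N_def using z by (intro pattern_class_subset) (auto simp: N_def)
      moreover have "p y \<in> a z" using z(2) unfolding N_def by blast
      ultimately show "\<exists>a u. openin X a \<and> p y \<in> a \<and> u \<in> U \<and>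
          {y' \<in> topspace Z. p y' \<in> a \<and> pattern C ?K y' = pattern C ?K y} \<subseteq> u"
        by (intro exI[of _ "a z"] exI[of _ "u z"]) blast
    qed
  qed
qed

lemma closedin_image_unmatched_patterns:
  assumes "finite K" "K \<subseteq> Kall"
  shows "closedin X (p ` {y \<in> topspace Z. pattern C K y \<notin> pattern C K ` R})"
proof -
  have "{y \<in> topspace Z. pattern C K y \<notin> pattern C K ` R}
      = topspace Z - (\<Union>r\<in>R. {y \<in> topspace Z. pattern C K y = pattern C K r})"
    by auto
  also have "closedin Z \<dots>"
    using assms clopen by (intro closedin_diff closedin_topspace openin_Union) (auto intro: openin_pattern_eq)
  finally show ?thesis
    using continuous_imp_closed_map[OF p compact Hausdorff] unfolding closed_map_def by blast
qed

lemma local_pattern_refinement: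
  assumes K: "finite K" "K \<subseteq> Kall"
    and uniform: "\<forall>y\<in>topspace Z. \<exists>a u. openin X a \<and> p y \<in> a \<and> u \<in> U \<and>
        {y' \<in> topspace Z. p y' \<in> a \<and> pattern C K y' = pattern C K y} \<subseteq> u"
    and x: "x \<in> topspace X"
  obtains v where "openin X v" "x \<in> v"
    "\<And>y0. y0 \<in> topspace Z \<Longrightarrow> p y0 \<in> v \<Longrightarrow>
       \<exists>u\<in>U. {y \<in> topspace Z. p y \<in> v \<and> pattern C K y = pattern C K y0} \<subseteq> u"
proof -
  let ?F = "{y \<in> topspace Z. p y = x}"
  have "pattern C K ` ?F \<subseteq> Pow K" by (auto simp: pattern_def)
  then have "finite (pattern C K ` ?F)" using K(1) by (simp add: finite_subset)
  from finite_subset_image[OF this order_refl]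
  obtain R where R: "R \<subseteq> ?F" "finite R" "pattern C K ` ?F = pattern C K ` R"
    by blast
  have "\<forall>r\<in>R. \<exists>a u. openin X a \<and> p r \<in> a \<and> u \<in> U \<and>
      {y \<in> topspace Z. p y \<in> a \<and> pattern C K y = pattern C K r} \<subseteq> u"
  proof
    fix r assume "r \<in> R"
    then have "r \<in> topspace Z" using R(1) by blast
    then show "\<exists>a u. openin X a \<and> p r \<in> a \<and> u \<in> U \<and>
      {y \<in> topspace Z. p y \<in> a \<and> pattern C K y = pattern C K r} \<subseteq> u"
      by (rule bspec[OF uniform])
  qed
  from bchoice[OF this] obtain a where "\<forall>r\<in>R. \<exists>u. openin X (a r) \<and> p r \<in> a r \<and> u \<in> U \<and>
      {y \<in> topspace Z. p y \<in> a r \<and> pattern C K y = pattern C K r} \<subseteq> u"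
    by blast
  from bchoice[OF this] obtain u where au: "\<forall>r\<in>R. openin X (a r) \<and> p r \<in> a r \<and> u r \<in> U \<and>
      {y \<in> topspace Z. p y \<in> a r \<and> pattern C K y = pattern C K r} \<subseteq> u r"
    by blast
  define Bad where "Bad = {y \<in> topspace Z. pattern C K y \<notin> pattern C K ` R}"
  have "closedin X (p ` Bad)" unfolding Bad_def by (rule closedin_image_unmatched_patterns[OF K])
  show thesis
  proof
    let ?v = "(\<Inter>r\<in>R. a r) \<inter> topspace X - p ` Bad"
    show "openin X ?v"
      using R(2) au \<open>closedin X (p ` Bad)\<close> by (intro openin_diff openin_INT) auto
    have "x \<notin> p ` Bad"
    proof
      assume "x \<in> p ` Bad"
      then obtain y where "y \<in> Bad" "p y = x" by blast
      then show False using R(3) unfolding Bad_def by blast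
    qed
    then show "x \<in> ?v" using x au R(1) by auto
    fix y0 assume y0: "y0 \<in> topspace Z" "p y0 \<in> ?v"
    then have "y0 \<notin> Bad" by blast
    then obtain r where r: "r \<in> R" "pattern C K r = pattern C K y0"
      using y0(1) unfolding Bad_def by force
    have "{y \<in> topspace Z. p y \<in> ?v \<and> pattern C K y = pattern C K y0}
        \<subseteq> {y \<in> topspace Z. p y \<in> a r \<and> pattern C K y = pattern C K r}"
      using r by auto
    also have "\<dots> \<subseteq> u r" using bspec[OF au r(1)] by blast
    finally show "\<exists>u\<in>U. {y \<in> topspace Z. p y \<in> ?v \<and> pattern C K y = pattern C K y0} \<subseteq> u"
      using bspec[OF au r(1)] by blast
  qed
qed

lemma pattern_refinement:
  assumes compact_X: "compact_space X" and U: "finite_open_cover Z U"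
  obtains V K where "finite_open_cover X V" "finite K" "K \<subseteq> Kall"
    "\<And>v y0. v \<in> V \<Longrightarrow> y0 \<in> topspace Z \<Longrightarrow> p y0 \<in> v \<Longrightarrow>
       \<exists>u\<in>U. {y \<in> topspace Z. p y \<in> v \<and> pattern C K y = pattern C K y0} \<subseteq> u"
proof -
  obtain K where K: "finite K" "K \<subseteq> Kall"
    and uniform: "\<forall>y\<in>topspace Z. \<exists>a u. openin X a \<and> p y \<in> a \<and> u \<in> U \<and>
        {y' \<in> topspace Z. p y' \<in> a \<and> pattern C K y' = pattern C K y} \<subseteq> u"
    by (rule uniform_pattern_nbhds[OF U]) (rule that)
  have "\<forall>x\<in>topspace X. \<exists>v. openin X v \<and> x \<in> v \<and> (\<forall>y0\<in>topspace Z. p y0 \<in> v \<longrightarrow>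
      (\<exists>u\<in>U. {y \<in> topspace Z. p y \<in> v \<and> pattern C K y = pattern C K y0} \<subseteq> u))"
  proof
    fix x assume x: "x \<in> topspace X"
    obtain v where "openin X v" "x \<in> v"
      "\<And>y0. y0 \<in> topspace Z \<Longrightarrow> p y0 \<in> v \<Longrightarrow>
         \<exists>u\<in>U. {y \<in> topspace Z. p y \<in> v \<and> pattern C K y = pattern C K y0} \<subseteq> u"
      by (rule local_pattern_refinement[OF K uniform x]) (rule that)
    then show "\<exists>v. openin X v \<and> x \<in> v \<and> (\<forall>y0\<in>topspace Z. p y0 \<in> v \<longrightarrow>
      (\<exists>u\<in>U. {y \<in> topspace Z. p y \<in> v \<and> pattern C K y = pattern C K y0} \<subseteq> u))"
      by blast
  qed
  from bchoice[OF this] obtain v where v: "\<forall>x\<in>topspace X. openin X (v x) \<and> x \<in> v x \<and>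
      (\<forall>y0\<in>topspace Z. p y0 \<in> v x \<longrightarrow>
        (\<exists>u\<in>U. {y \<in> topspace Z. p y \<in> v x \<and> pattern C K y = pattern C K y0} \<subseteq> u))"
    by blast
  have "openin X (v x) \<and> x \<in> v x" if "x \<in> topspace X" for x using v that by blast
  with compact_X[unfolded compact_space_def] obtain X0
    where X0: "finite X0" "X0 \<subseteq> topspace X" "topspace X \<subseteq> (\<Union>x\<in>X0. v x)"
    by (rule compactin_indexed_subcover)
  show thesis
  proof
    show "finite_open_cover X (v ` X0)"
      using X0 v unfolding finite_open_cover_def by auto
    show "finite K" "K \<subseteq> Kall" by (fact K)+
    fix v' y0 assume "v' \<in> v ` X0" "y0 \<in> topspace Z" "p y0 \<in> v'"
    then show "\<exists>u\<in>U. {y \<in> topspace Z. p y \<in> v' \<and> pattern C K y = pattern C K y0} \<subseteq> u"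
      using v X0(2) by blast
  qed
qed

end

lemma act_pre_act_iff:
  assumes act: "cont_action G Z TZ" and "k \<in> carrier G" "h \<in> carrier G" "y \<in> topspace Z"
  shows "TZ h y \<in> act_pre Z TZ k A \<longleftrightarrow> y \<in> act_pre Z TZ (k \<otimes>\<^bsub>G\<^esub> h) A"
  using assms cont_action_topspace[OF act] cont_action_mult[OF act] by (auto simp: act_pre_def)

lemma pattern_act_eq:
  assumes act: "cont_action G Z TZ" and h: "h \<in> carrier G" and K: "K \<subseteq> carrier G"
    and KQ: "\<And>k. k \<in> K \<Longrightarrow> k \<otimes>\<^bsub>G\<^esub> h \<in> Q" and y: "y \<in> topspace Z" "y0 \<in> topspace Z"
    and eq: "pattern (\<lambda>q. act_pre Z TZ q A) Q y = pattern (\<lambda>q. act_pre Z TZ q A) Q y0"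
  shows "pattern (\<lambda>q. act_pre Z TZ q A) K (TZ h y) = pattern (\<lambda>q. act_pre Z TZ q A) K (TZ h y0)"
proof -
  have "TZ h y \<in> act_pre Z TZ k A \<longleftrightarrow> TZ h y0 \<in> act_pre Z TZ k A" if k: "k \<in> K" for k
  proof -
    have kc: "k \<in> carrier G" using k K by blast
    have "y \<in> act_pre Z TZ (k \<otimes>\<^bsub>G\<^esub> h) A \<longleftrightarrow> y0 \<in> act_pre Z TZ (k \<otimes>\<^bsub>G\<^esub> h) A"
      using eq KQ[OF k] unfolding pattern_def by blast
    then show ?thesis
      by (simp add: act_pre_act_iff[OF act kc h y(1)] act_pre_act_iff[OF act kc h y(2)])
  qed
  then show ?thesis unfolding pattern_def by blast
qed

lemma join_cover_element_covers_pattern_class: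
  assumes actX: "cont_action G X T" and actZ: "cont_action G Z TZ"
    and equiv: "\<And>g y. g \<in> carrier G \<Longrightarrow> y \<in> topspace Z \<Longrightarrow> p (TZ g y) = T g (p y)"
    and s: "\<forall>i. s i \<in> carrier G" and K: "K \<subseteq> carrier G"
    and KQ: "\<And>k i. k \<in> K \<Longrightarrow> i \<in> {1..n} \<Longrightarrow> k \<otimes>\<^bsub>G\<^esub> s i \<in> Q"
    and refine: "\<And>v y0. v \<in> V \<Longrightarrow> y0 \<in> topspace Z \<Longrightarrow> p y0 \<in> v \<Longrightarrow>
      \<exists>u\<in>U. {y \<in> topspace Z. p y \<in> v \<and>
        pattern (\<lambda>q. act_pre Z TZ q A) K y = pattern (\<lambda>q. act_pre Z TZ q A) K y0} \<subseteq> u"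
    and c: "c \<in> join_cover X T s n V" and y0: "y0 \<in> topspace Z" "p y0 \<in> c"
  shows "\<exists>e\<in>join_cover Z TZ s n U. {y \<in> topspace Z. p y \<in> c \<and>
    pattern (\<lambda>q. act_pre Z TZ q A) Q y = pattern (\<lambda>q. act_pre Z TZ q A) Q y0} \<subseteq> e"
proof -
  let ?P = "pattern (\<lambda>q. act_pre Z TZ q A)"
  obtain W where W: "W \<in> {1..n} \<rightarrow> V" "c = topspace X \<inter> (\<Inter>i\<in>{1..n}. act_pre X T (s i) (W i))"
    using c by (rule join_cover_memE)
  have in_W: "p (TZ (s i) y) \<in> W i" if "i \<in> {1..n}" "y \<in> topspace Z" "p y \<in> c" for i y
    using that W(2) equiv s unfolding act_pre_def by auto
  have "\<forall>i\<in>{1..n}. \<exists>u. u \<in> U \<and>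
      {y \<in> topspace Z. p y \<in> W i \<and> ?P K y = ?P K (TZ (s i) y0)} \<subseteq> u"
  proof
    fix i assume i: "i \<in> {1..n}"
    have "TZ (s i) y0 \<in> topspace Z" using cont_action_topspace[OF actZ] s y0(1) by blast
    then show "\<exists>u. u \<in> U \<and> {y \<in> topspace Z. p y \<in> W i \<and> ?P K y = ?P K (TZ (s i) y0)} \<subseteq> u"
      using refine[OF funcset_mem[OF W(1) i]] in_W[OF i y0] by blast
  qed
  from bchoice[OF this] obtain u where u: "\<forall>i\<in>{1..n}. u i \<in> U \<and>
      {y \<in> topspace Z. p y \<in> W i \<and> ?P K y = ?P K (TZ (s i) y0)} \<subseteq> u i"
    by blast
  let ?e = "topspace Z \<inter> (\<Inter>i\<in>{1..n}. act_pre Z TZ (s i) (u i))"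
  have "?e \<in> join_cover Z TZ s n U" using u by (intro join_cover_memI) auto
  moreover have "y \<in> ?e" if y: "y \<in> topspace Z" "p y \<in> c" "?P Q y = ?P Q y0" for y
  proof -
    have "TZ (s i) y \<in> u i" if i: "i \<in> {1..n}" for i
    proof -
      have "?P K (TZ (s i) y) = ?P K (TZ (s i) y0)"
        using KQ i s by (intro pattern_act_eq[OF actZ _ K _ y(1) y0(1) y(3)]) auto
      moreover have "TZ (s i) y \<in> topspace Z" using cont_action_topspace[OF actZ] s y(1) by blast
      ultimately show ?thesis using u i in_W[OF i y(1,2)] by blast
    qed
    then show ?thesis using y(1) unfolding act_pre_def by blast
  qed
  ultimately show ?thesis by blast
qed

lemma Ncov_join_cover_le_mult_card_patterns:
  assumes actX: "cont_action G X T" and actZ: "cont_action G Z TZ" and p: "continuous_map Z X p"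
    and equiv: "\<And>g y. g \<in> carrier G \<Longrightarrow> y \<in> topspace Z \<Longrightarrow> p (TZ g y) = T g (p y)"
    and s: "\<forall>i. s i \<in> carrier G" and V: "finite_open_cover X V" and K: "K \<subseteq> carrier G"
    and Q: "finite Q" "\<And>k i. k \<in> K \<Longrightarrow> i \<in> {1..n} \<Longrightarrow> k \<otimes>\<^bsub>G\<^esub> s i \<in> Q"
    and refine: "\<And>v y0. v \<in> V \<Longrightarrow> y0 \<in> topspace Z \<Longrightarrow> p y0 \<in> v \<Longrightarrow>
      \<exists>u\<in>U. {y \<in> topspace Z. p y \<in> v \<and>
        pattern (\<lambda>q. act_pre Z TZ q A) K y = pattern (\<lambda>q. act_pre Z TZ q A) K y0} \<subseteq> u"
  shows "Ncov Z (join_cover Z TZ s n U)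
    \<le> Ncov X (join_cover X T s n V) * card (pattern (\<lambda>q. act_pre Z TZ q A) Q ` topspace Z)"
proof -
  let ?P = "pattern (\<lambda>q. act_pre Z TZ q A) Q"
  obtain D where D: "D \<subseteq> join_cover X T s n V" "finite D" "topspace X \<subseteq> \<Union>D"
      "card D = Ncov X (join_cover X T s n V)"
    using join_cover_covers_action[OF actX s V] by (rule Ncov_attained)
  have "finite (?P ` topspace Z)"
    by (rule finite_subset[of _ "Pow Q"]) (auto simp: pattern_def Q(1))
  have "\<forall>y\<in>topspace Z. \<exists>d. d \<in> D \<and> p y \<in> d"
    using D(3) funcset_mem[OF continuous_map_funspace[OF p]] by blast
  from bchoice[OF this] obtain d where d: "\<forall>y\<in>topspace Z. d y \<in> D \<and> p y \<in> d y" by blast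
  define PP where "PP = (\<lambda>y. (d y, ?P y)) ` topspace Z"
  have "\<forall>q\<in>PP. \<exists>e. e \<in> join_cover Z TZ s n U \<and>
      {y \<in> topspace Z. p y \<in> fst q \<and> ?P y = snd q} \<subseteq> e"
  proof
    fix q assume "q \<in> PP"
    then obtain y0 where y0: "y0 \<in> topspace Z" "q = (d y0, ?P y0)" unfolding PP_def by blast
    then have "\<exists>e\<in>join_cover Z TZ s n U. {y \<in> topspace Z. p y \<in> d y0 \<and> ?P y = ?P y0} \<subseteq> e"
      using d D(1) by (intro join_cover_element_covers_pattern_class[OF actX actZ equiv s K Q(2) refine])
        auto
    then show "\<exists>e. e \<in> join_cover Z TZ s n U \<and> {y \<in> topspace Z. p y \<in> fst q \<and> ?P y = snd q} \<subseteq> e"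
      using y0(2) by auto
  qed
  from bchoice[OF this] obtain E where E: "\<forall>q\<in>PP. E q \<in> join_cover Z TZ s n U \<and>
      {y \<in> topspace Z. p y \<in> fst q \<and> ?P y = snd q} \<subseteq> E q"
    by blast
  have "finite PP" unfolding PP_def
    by (rule finite_subset[of _ "D \<times> ?P ` topspace Z"]) (use d D(2) \<open>finite (?P ` topspace Z)\<close> in auto)
  have "Ncov Z (join_cover Z TZ s n U) \<le> card (E ` PP)"
  proof (rule Ncov_le_card)
    show "E ` PP \<subseteq> join_cover Z TZ s n U" "finite (E ` PP)" using E \<open>finite PP\<close> by auto
    show "topspace Z \<subseteq> \<Union>(E ` PP)"
    proof
      fix y assume y: "y \<in> topspace Z"
      then have yPP: "(d y, ?P y) \<in> PP" unfolding PP_def by blast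
      moreover have "y \<in> E (d y, ?P y)" using bspec[OF E yPP] y d by auto
      ultimately show "y \<in> \<Union>(E ` PP)" by blast
    qed
  qed
  also have "\<dots> \<le> card PP" by (rule card_image_le[OF \<open>finite PP\<close>])
  also have "\<dots> \<le> card (D \<times> ?P ` topspace Z)"
    by (rule card_mono) (use d D(2) \<open>finite (?P ` topspace Z)\<close> in \<open>auto simp: PP_def\<close>)
  also have "\<dots> = Ncov X (join_cover X T s n V) * card (?P ` topspace Z)"
    by (simp add: card_cartesian_product D(4))
  finally show ?thesis .
qed

lemma act_pre_clopen:
  assumes "cont_action G Z TZ" "k \<in> carrier G" "openin Z A" "closedin Z A"
  shows "openin Z (act_pre Z TZ k A) \<and> closedin Z (act_pre Z TZ k A)"
proof -
  have "continuous_map Z Z (TZ k)" using assms(1,2) unfolding cont_action_def by blast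
  then show ?thesis unfolding act_pre_def
    using openin_continuous_map_preimage closedin_continuous_map_preimage assms(3,4) by blast
qed

lemma null_action_extension:
  assumes grp: "group G" and actX: "cont_action G X T" and actZ: "cont_action G Z TZ"
    and compact_X: "compact_space X" and compact_Z: "compact_space Z" and Hausdorff: "Hausdorff_space X"
    and p: "continuous_map Z X p"
    and equiv: "\<And>g y. g \<in> carrier G \<Longrightarrow> y \<in> topspace Z \<Longrightarrow> p (TZ g y) = T g (p y)"
    and A: "openin Z A" "closedin Z A"
    and separating: "\<And>z z'. z \<in> topspace Z \<Longrightarrow> z' \<in> topspace Z \<Longrightarrow> p z = p z' \<Longrightarrow> z \<noteq> z'
      \<Longrightarrow> \<exists>k\<in>carrier G. (TZ k z \<in> A) \<noteq> (TZ k z' \<in> A)"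
    and null: "null_action G X T" and indep: "\<not> arb_large_indep G Z TZ A (topspace Z - A)"
  shows "null_action G Z TZ"
  unfolding null_action_def
proof (intro allI impI)
  fix s :: "nat \<Rightarrow> _" and U assume s: "\<forall>n. s n \<in> carrier G" and U: "finite_open_cover Z U"
  let ?C = "\<lambda>k. act_pre Z TZ k A"
  have separating': "\<exists>k\<in>carrier G. (z \<in> ?C k) \<noteq> (z' \<in> ?C k)"
    if "z \<in> topspace Z" "z' \<in> topspace Z" "p z = p z'" "z \<noteq> z'" for z z'
    using separating[OF that] that(1,2) unfolding act_pre_def by auto
  obtain V K where V: "finite_open_cover X V" and K: "finite K" "K \<subseteq> carrier G"
    and refine: "\<And>v y0. v \<in> V \<Longrightarrow> y0 \<in> topspace Z \<Longrightarrow> p y0 \<in> v \<Longrightarrow>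
       \<exists>u\<in>U. {y \<in> topspace Z. p y \<in> v \<and> pattern ?C K y = pattern ?C K y0} \<subseteq> u"
  proof (rule pattern_refinement[where Z = Z and X = X and p = p and C = ?C and Kall = "carrier G"
        and U = U])
    show "\<And>k. k \<in> carrier G \<Longrightarrow> openin Z (?C k) \<and> closedin Z (?C k)"
      by (rule act_pre_clopen[OF actZ _ A])
    show "\<And>z z'. z \<in> topspace Z \<Longrightarrow> z' \<in> topspace Z \<Longrightarrow> p z = p z' \<Longrightarrow> z \<noteq> z'
      \<Longrightarrow> \<exists>k\<in>carrier G. (z \<in> ?C k) \<noteq> (z' \<in> ?C k)" by (rule separating')
    show "compact_space Z" "Hausdorff_space X" "continuous_map Z X p" "compact_space X"
      "finite_open_cover Z U" by (fact compact_Z Hausdorff p compact_X U)+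
  qed (rule that)
  obtain d where d: "\<And>Q. finite Q \<Longrightarrow> Q \<subseteq> carrier G \<Longrightarrow>
      card (pattern ?C Q ` topspace Z) \<le> (card Q + 1) ^ d"
    by (rule card_patterns_le_if_not_arb_large_indep[OF actZ _ indep]) (blast, rule that)
  have "Ncov Z (join_cover Z TZ s n U) \<le> Ncov X (join_cover X T s n V) * (card K * n + 1) ^ d" for n
  proof -
    define Q where "Q = (\<lambda>(k, i). k \<otimes>\<^bsub>G\<^esub> s i) ` (K \<times> {1..n})"
    have Q: "finite Q" "Q \<subseteq> carrier G" "card Q \<le> card K * n"
      using K s grp card_image_le[of "K \<times> {1..n}" "\<lambda>(k, i). k \<otimes>\<^bsub>G\<^esub> s i"]
      unfolding Q_def by (auto simp: card_cartesian_product group.is_monoid monoid.m_closed)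
    have "Ncov Z (join_cover Z TZ s n U)
        \<le> Ncov X (join_cover X T s n V) * card (pattern ?C Q ` topspace Z)"
      using Q(1) K(2) unfolding Q_def
      by (intro Ncov_join_cover_le_mult_card_patterns[OF actX actZ p equiv s V K(2) _ _ refine]) auto
    also have "\<dots> \<le> Ncov X (join_cover X T s n V) * (card K * n + 1) ^ d"
    proof (rule mult_le_mono2)
      have "card (pattern ?C Q ` topspace Z) \<le> (card Q + 1) ^ d" by (rule d[OF Q(1,2)])
      also have "\<dots> \<le> (card K * n + 1) ^ d" using Q(3) by (simp add: power_mono)
      finally show "card (pattern ?C Q ` topspace Z) \<le> (card K * n + 1) ^ d" .
    qed
    finally show ?thesis .
  qed
  moreover have "seq_entropy X T s V = 0" using null s V unfolding null_action_def by blast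
  ultimately show "seq_entropy Z TZ s U = 0"
    unfolding seq_entropy_def by (rule limsup_ln_div_eq_0_if_le_poly)
qed

section \<open>McMahon extensions\<close>

lemma sign_valued_level_sets:
  assumes g: "continuous_map Z euclideanreal g" and sign: "\<forall>z\<in>topspace Z. g z \<in> {1, -1}"
  shows "closedin Z {z \<in> topspace Z. g z = 1}" "closedin Z {z \<in> topspace Z. g z = -1}"
    "openin Z {z \<in> topspace Z. g z = 1}"
    "topspace Z - {z \<in> topspace Z. g z = 1} = {z \<in> topspace Z. g z = -1}"
proof -
  show "closedin Z {z \<in> topspace Z. g z = 1}"
    using closedin_continuous_map_preimage[OF g, of "{1}"] by simp
  show closed: "closedin Z {z \<in> topspace Z. g z = -1}"
    using closedin_continuous_map_preimage[OF g, of "{-1}"] by simp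
  have "{z \<in> topspace Z. g z = 1} = topspace Z - {z \<in> topspace Z. g z = -1}" using sign by auto
  then show "openin Z {z \<in> topspace Z. g z = 1}" using closed by (simp add: openin_diff)
  show "topspace Z - {z \<in> topspace Z. g z = 1} = {z \<in> topspace Z. g z = -1}" using sign by auto
qed

lemma mcmahon_ext_fibre_x1_distinct:
  assumes grp: "group G" and act: "cont_action G X T" and HX: "Hausdorff_space X"
    and x1: "x1 \<in> topspace X"
    and noext: "\<not> (\<exists>h. continuous_map X euclideanreal h \<and> (\<forall>x\<in>topspace X - {x1}. h x = f x))"
    and mc: "mcmahon_ext G X T x1 f Xf Tf pf ft"
    and z: "z \<in> topspace Xf" "z' \<in> topspace Xf" "pf z = x1" "pf z' = x1" "z \<noteq> z'"
  shows "ft z \<noteq> ft z'"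
proof
  assume eq: "ft z = ft z'"
  have "T \<one>\<^bsub>G\<^esub> x1 = x1" using act x1 unfolding cont_action_def by blast
  then have "x1 \<in> orbit G T x1"
    using grp unfolding orbit_def by (metis (mono_tags, lifting) group.is_monoid mem_Collect_eq monoid.one_closed)
  then have "card {w \<in> topspace Xf. pf w = x1} = 2" using mc unfolding mcmahon_ext_def by blast
  then obtain a b where ab: "{w \<in> topspace Xf. pf w = x1} = {a, b}" by (auto simp: card_2_iff)
  then have fibre: "w \<in> {z, z'}" if "w \<in> topspace Xf" "pf w = x1" for w
    using that z by (metis (mono_tags, lifting) empty_iff insert_iff mem_Collect_eq)
  \<comment> \<open>With equal values at z and z', ft factors through the quotient map pf as a continuous
    extension of f.\<close>
  define h where "h x = (if x = x1 then ft z else f x)" for x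
  have "continuous_map Xf euclideanreal (h \<circ> pf)"
  proof (rule continuous_map_eq)
    show "continuous_map Xf euclideanreal ft" using mc unfolding mcmahon_ext_def by blast
    fix w assume "w \<in> topspace Xf"
    then show "ft w = (h \<circ> pf) w"
      using fibre eq mc unfolding mcmahon_ext_def h_def by (cases "pf w = x1") auto
  qed
  moreover have "quotient_map Xf X pf"
    using mc HX unfolding mcmahon_ext_def by (auto intro: continuous_imp_quotient_map)
  ultimately have "continuous_map X euclideanreal h" by (rule continuous_compose_quotient_map[rotated])
  moreover have "\<forall>x\<in>topspace X - {x1}. h x = f x" by (simp add: h_def)
  ultimately show False using noext by blast
qed

lemma mcmahon_ext_fibres_separated:
  assumes grp: "group G" and act: "cont_action G X T" and HX: "Hausdorff_space X"
    and x1: "x1 \<in> topspace X"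
    and noext: "\<not> (\<exists>h. continuous_map X euclideanreal h \<and> (\<forall>x\<in>topspace X - {x1}. h x = f x))"
    and mc: "mcmahon_ext G X T x1 f Xf Tf pf ft" and ft: "\<forall>z\<in>topspace Xf. ft z \<in> {1, -1}"
    and z: "z \<in> topspace Xf" "z' \<in> topspace Xf" "pf z = pf z'" "z \<noteq> z'"
  shows "\<exists>k\<in>carrier G.
    (Tf k z \<in> {w \<in> topspace Xf. ft w = 1}) \<noteq> (Tf k z' \<in> {w \<in> topspace Xf. ft w = 1})"
proof -
  have actf: "cont_action G Xf Tf"
    and equiv: "\<And>g w. g \<in> carrier G \<Longrightarrow> w \<in> topspace Xf \<Longrightarrow> pf (Tf g w) = T g (pf w)"
    and fibre1: "\<And>x. x \<in> topspace X - orbit G T x1 \<Longrightarrow> card {w \<in> topspace Xf. pf w = x} = 1"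
    and pf: "continuous_map Xf X pf"
    using mc unfolding mcmahon_ext_def by blast+
  have "pf z \<in> orbit G T x1"
  proof (rule ccontr)
    assume "pf z \<notin> orbit G T x1"
    moreover have "pf z \<in> topspace X" using z(1) by (rule funcset_mem[OF continuous_map_funspace[OF pf]])
    ultimately have "card {w \<in> topspace Xf. pf w = pf z} = 1" using fibre1 by blast
    moreover have "z \<in> {w \<in> topspace Xf. pf w = pf z}" "z' \<in> {w \<in> topspace Xf. pf w = pf z}"
      using z by auto
    ultimately show False using z(4) by (metis card_1_singletonE singletonD)
  qed
  then obtain g where g: "g \<in> carrier G" "pf z = T g x1" unfolding orbit_def by blast
  define k where "k = inv\<^bsub>G\<^esub> g"
  have k: "k \<in> carrier G" "k \<otimes>\<^bsub>G\<^esub> g = \<one>\<^bsub>G\<^esub>" "g \<otimes>\<^bsub>G\<^esub> k = \<one>\<^bsub>G\<^esub>"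
    using grp g(1) unfolding k_def by (auto simp: group.l_inv group.r_inv group.inv_closed)
  have back_to_x1: "pf (Tf k w) = x1" if "w \<in> topspace Xf" "pf w = T g x1" for w
  proof -
    have "pf (Tf k w) = T (k \<otimes>\<^bsub>G\<^esub> g) x1"
      using equiv[OF k(1) that(1)] that(2) cont_action_mult[OF act k(1) g(1) x1] by simp
    also have "\<dots> = x1" using k(2) act x1 unfolding cont_action_def by simp
    finally show ?thesis .
  qed
  have "Tf k z \<noteq> Tf k z'"
  proof
    assume "Tf k z = Tf k z'"
    then have "Tf (g \<otimes>\<^bsub>G\<^esub> k) z = Tf (g \<otimes>\<^bsub>G\<^esub> k) z'"
      using cont_action_mult[OF actf g(1) k(1)] z(1,2) by simp
    then show False using k(3) z(1,2,4) actf unfolding cont_action_def by simp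
  qed
  moreover have Tk: "Tf k z \<in> topspace Xf" "Tf k z' \<in> topspace Xf"
    using cont_action_topspace[OF actf k(1)] z(1,2) by auto
  ultimately have "ft (Tf k z) \<noteq> ft (Tf k z')"
    using mcmahon_ext_fibre_x1_distinct[OF grp act HX x1 noext mc] z back_to_x1 g(2) by metis
  moreover have "ft (Tf k z) \<in> {1, -1}" "ft (Tf k z') \<in> {1, -1}" using ft Tk by blast+
  ultimately show ?thesis using k(1) Tk by (intro bexI[of _ k]) auto
qed

theorem lemma3p2:
  fixes G :: "('g, 'b) monoid_scheme" and X :: "'x topology" and T :: "'g \<Rightarrow> 'x \<Rightarrow> 'x"
    and x1 :: 'x and f :: "'x \<Rightarrow> real"
    and Xf :: "'z topology" and Tf :: "'g \<Rightarrow> 'z \<Rightarrow> 'z" and pf :: "'z \<Rightarrow> 'x" and ft :: "'z \<Rightarrow> real"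
  assumes "group G" and "countable (carrier G)" and "infinite (carrier G)"
    and "compact_space X" and "metrizable_space X"
    and "cont_action G X T" and "minimal_action G X T"
    and "\<exists>x\<in>topspace X. \<exists>y\<in>topspace X. y \<notin> orbit G T x"
    and "x1 \<in> topspace X"
    and "\<forall>g\<in>carrier G. T g x1 = x1 \<longrightarrow> g = \<one>\<^bsub>G\<^esub>"
    and "\<forall>x\<in>topspace X - {x1}. f x \<in> {1, -1}"
    and "continuous_map (subtopology X (topspace X - {x1})) euclideanreal f"
    and "\<not> (\<exists>h. continuous_map X euclideanreal h \<and> (\<forall>x\<in>topspace X - {x1}. h x = f x))"
    and "mcmahon_ext G X T x1 f Xf Tf pf ft"
    and "\<forall>z\<in>topspace Xf. ft z \<in> {1, -1}"
  shows "null_action G Xf Tf \<longleftrightarrow>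
           null_action G X T \<and>
           \<not> arb_large_indep G Xf Tf {z\<in>topspace Xf. ft z = 1} {z\<in>topspace Xf. ft z = -1}"
proof -
  let ?A = "{z \<in> topspace Xf. ft z = 1}" and ?B = "{z \<in> topspace Xf. ft z = -1}"
  have HX: "Hausdorff_space X" using assms(5) by (rule metrizable_imp_Hausdorff_space)
  have compact_Xf: "compact_space Xf" and actf: "cont_action G Xf Tf" and pf: "continuous_map Xf X pf"
    and pf_onto: "pf ` topspace Xf = topspace X"
    and equiv: "\<And>g z. g \<in> carrier G \<Longrightarrow> z \<in> topspace Xf \<Longrightarrow> pf (Tf g z) = T g (pf z)"
    and ft: "continuous_map Xf euclideanreal ft"
    using assms(14) unfolding mcmahon_ext_def by blast+
  note level = sign_valued_level_sets[OF ft assms(15)]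
  have separating: "\<And>z z'. z \<in> topspace Xf \<Longrightarrow> z' \<in> topspace Xf \<Longrightarrow> pf z = pf z' \<Longrightarrow> z \<noteq> z'
      \<Longrightarrow> \<exists>k\<in>carrier G. (Tf k z \<in> ?A) \<noteq> (Tf k z' \<in> ?A)"
    by (rule mcmahon_ext_fibres_separated[OF assms(1,6) HX assms(9,13,14,15)])
  show ?thesis
  proof
    assume null: "null_action G Xf Tf"
    have "null_action G X T"
      by (rule null_action_factor[where p = pf]) (fact actf pf pf_onto equiv null)+
    moreover have "disjnt ?A ?B" by (auto simp: disjnt_def)
    then have "\<not> arb_large_indep G Xf Tf ?A ?B"
      by (rule not_arb_large_indep_if_null_action[OF actf null level(1,2)])
    ultimately show "null_action G X T \<and> \<not> arb_large_indep G Xf Tf ?A ?B" ..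
  next
    assume "null_action G X T \<and> \<not> arb_large_indep G Xf Tf ?A ?B"
    then have null: "null_action G X T" and indep: "\<not> arb_large_indep G Xf Tf ?A (topspace Xf - ?A)"
      unfolding level(4) by blast+
    show "null_action G Xf Tf"
      by (rule null_action_extension[where p = pf and A = ?A])
        (fact assms(1,4,6) actf compact_Xf HX pf equiv level(3,1) separating null indep)+
  qed
qed

end
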